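(* Let $C_n$ be the cycle graph on $n$ nodes. For every fixed $\epsilon\in(0,1)$, $t_{\epsilon,1}(C_n)=\Theta_\epsilon(n^3)$, i.e. there are constants $0<c_\epsilon\le C_\epsilon$ depending only on $\epsilon$ with $c_\epsilon n^3\le t_{\epsilon,1}(C_n)\le C_\epsilon n^3$.
   Context: The averaging process on a finite, undirected, connected graph $G=(V,E)$, $V=\{1,\dots,n\}$: the state vector $v(t)\in\mathbb R^n$, $t=0,1,2,\dots$, starts from a given $v(0)$; at each step $t\ge 1$ an edge $\{i,j\}\in E$ is chosen uniformly at random (independently of all previous choices) and both $v_i$ and $v_j$ are replaced by $(v_i+v_j)/2$, all other coordinates unchanged. $\bar v=(a,\dots,a)^T$ with $a=\frac1n\sum_i v_i(0)$. $t_{\epsilon,1}(G)$ is the least $t\in\mathbb N$ such that for every $v(0)$ with $\|v(0)\|_1=1$ one has $\mathbb E\|v(t)-\bar v\|_1\le\epsilon$. *)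

theory Defs
  imports "HOL-Probability.Probability"
begin

text \<open>Graphs on the vertex set {0..<n}; states are vectors nat => real (only
  coordinates 0..<n are relevant). Each undirected edge {i,j} is represented
  by exactly one ordered pair (i,j) in the edge set E.\<close>

definition avg_step :: "nat \<times> nat \<Rightarrow> (nat \<Rightarrow> real) \<Rightarrow> (nat \<Rightarrow> real)" where
  "avg_step e v = (let (i, j) = e; m = (v i + v j) / 2 in v(i := m, j := m))"

fun avg_state :: "(nat \<times> nat) set \<Rightarrow> (nat \<Rightarrow> real) \<Rightarrow> nat \<Rightarrow> (nat \<Rightarrow> real) pmf" where
  "avg_state E v 0 = return_pmf v"
| "avg_state E v (Suc t) =
     bind_pmf (avg_state E v t) (\<lambda>w. map_pmf (\<lambda>e. avg_step e w) (pmf_of_set E))"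

definition l1norm :: "nat \<Rightarrow> (nat \<Rightarrow> real) \<Rightarrow> real" where
  "l1norm n v = (\<Sum>i<n. \<bar>v i\<bar>)"

definition mean_val :: "nat \<Rightarrow> (nat \<Rightarrow> real) \<Rightarrow> real" where
  "mean_val n v = (\<Sum>i<n. v i) / real n"

definition exp_l1_dist :: "nat \<Rightarrow> (nat \<times> nat) set \<Rightarrow> (nat \<Rightarrow> real) \<Rightarrow> nat \<Rightarrow> real" where
  "exp_l1_dist n E v t =
     measure_pmf.expectation (avg_state E v t) (\<lambda>w. \<Sum>i<n. \<bar>w i - mean_val n v\<bar>)"

definition t_eps_1 :: "real \<Rightarrow> nat \<Rightarrow> (nat \<times> nat) set \<Rightarrow> nat" where
  "t_eps_1 \<epsilon> n E = (LEAST t. \<forall>v. l1norm n v = 1 \<longrightarrow> exp_l1_dist n E v t \<le> \<epsilon>)"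

definition cycle_edges :: "nat \<Rightarrow> (nat \<times> nat) set" where
  "cycle_edges n = {(i, Suc i mod n) | i. i < n}"

end

theory Submission
  imports Defs
begin

text \<open>
  The squared distance h(v) = sum_i (v_i - a)^2 to the consensus decreases in
  expectation by D(v)/(2n) per step, D being the Dirichlet form of the cycle. Since the l1
  distance to the consensus never increases, a Nash inequality h^3 <= 4 |v - a|_1^4 D(v) and
  Jensen's inequality for the cube give E h(t+1) <= E h(t) - (E h(t))^3 / (128 n), whence
  E h(t) <= 8 sqrt(n/t); by Cauchy-Schwarz, E |v(t) - a|_1 <= eps once t >= 64 n^3 / eps^4.

  F(v) = sum_i v_i cos(2 pi i / n) is an eigenfunction of the expected update, with
  eigenvalue 1 - (2 - 2 cos(2 pi / n)) / (2n) >= 1 - 2 pi^2 / n^3, and F(v) <= |v - a|_1. From the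
  unit vector at vertex 0, where F = 1, Bernoulli's inequality keeps E |v(t) - a|_1 > eps as long
  as t < (1 - eps) n^3 / (2 pi^2).
\<close>

lemma abs_mult_abs_diff_le:
  fixes a b :: real
  shows "\<bar>a * \<bar>a\<bar> - b * \<bar>b\<bar>\<bar> \<le> \<bar>a - b\<bar> * (\<bar>a\<bar> + \<bar>b\<bar>)"
proof (cases "0 \<le> a * b")
  case True
  then have "a * \<bar>a\<bar> - b * \<bar>b\<bar> = (a - b) * (\<bar>a\<bar> + \<bar>b\<bar>)"
    by (cases "0 \<le> a"; cases "0 \<le> b") (auto simp: algebra_simps zero_le_mult_iff)
  then show ?thesis by (simp add: abs_mult)
next
  case False
  then have "\<bar>a * \<bar>a\<bar> - b * \<bar>b\<bar>\<bar> = a\<^sup>2 + b\<^sup>2" "\<bar>a - b\<bar> * (\<bar>a\<bar> + \<bar>b\<bar>) = a\<^sup>2 + b\<^sup>2 - 2 * a * b"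
    by (cases "0 \<le> a"; cases "0 \<le> b"; simp add: zero_le_mult_iff power2_eq_square algebra_simps)+
  with False show ?thesis by simp
qed

lemma abs_add_abs_sq_le:
  fixes x y :: real
  shows "(\<bar>x\<bar> + \<bar>y\<bar>)\<^sup>2 \<le> 2 * x\<^sup>2 + 2 * y\<^sup>2"
proof -
  have "2 * x\<^sup>2 + 2 * y\<^sup>2 - (\<bar>x\<bar> + \<bar>y\<bar>)\<^sup>2 = (\<bar>x\<bar> - \<bar>y\<bar>)\<^sup>2"
    by (simp add: power2_eq_square algebra_simps)
  then show ?thesis by (metis diff_ge_0_iff_ge zero_le_power2)
qed

lemma abs_diff_le_sum_abs_diff:
  fixes F :: "nat \<Rightarrow> real"
  assumes "i < n" "j < n"
  shows "\<bar>F j - F i\<bar> \<le> (\<Sum>k<n - 1. \<bar>F (Suc k) - F k\<bar>)"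
proof -
  have le: "\<bar>F j - F i\<bar> \<le> (\<Sum>k<n - 1. \<bar>F (Suc k) - F k\<bar>)" if "i \<le> j" "j < n" for i j
  proof -
    have "\<bar>F j - F i\<bar> = \<bar>\<Sum>k=i..<j. F (Suc k) - F k\<bar>"
      using sum_Suc_diff'[OF \<open>i \<le> j\<close>, of F] by simp
    also have "\<dots> \<le> (\<Sum>k=i..<j. \<bar>F (Suc k) - F k\<bar>)"
      by (rule sum_abs)
    also have "\<dots> \<le> (\<Sum>k<n - 1. \<bar>F (Suc k) - F k\<bar>)"
      by (rule sum_mono2) (use that in auto)
    finally show ?thesis .
  qed
  show ?thesis
    using le[of i j] le[of j i] assms by (cases "i \<le> j") (auto simp: abs_minus_commute)
qed

lemma cube_ge_tangent:
  fixes h z :: real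
  assumes "0 \<le> h" "0 \<le> z"
  shows "z ^ 3 + 3 * z\<^sup>2 * (h - z) \<le> h ^ 3"
proof -
  have "h ^ 3 - (z ^ 3 + 3 * z\<^sup>2 * (h - z)) = (h - z)\<^sup>2 * (h + 2 * z)"
    by (simp add: power2_eq_square power3_eq_cube algebra_simps)
  also have "\<dots> \<ge> 0" using assms by simp
  finally show ?thesis by simp
qed

lemma inverse_sq_step:
  fixes K z y :: real
  assumes K: "0 < K" and z: "0 < z" and y: "0 < y" and le: "y \<le> z - z ^ 3 / K"
  shows "1 / z\<^sup>2 + 2 / K \<le> 1 / y\<^sup>2"
proof -
  define s where "s = z\<^sup>2 / K"
  have yz: "y \<le> z * (1 - s)"
    using le unfolding s_def by (simp add: power2_eq_square power3_eq_cube field_simps)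
  with y z have s1: "s < 1"
    by (metis diff_gt_0_iff_gt mult_pos_pos not_less order_less_le_trans zero_less_mult_pos)
  have poly: "(1 + 2 * s) * (1 - s)\<^sup>2 \<le> 1"
  proof -
    have "1 - (1 + 2 * s) * (1 - s)\<^sup>2 = s\<^sup>2 * (3 - 2 * s)"
      by (simp add: power2_eq_square algebra_simps)
    also have "\<dots> \<ge> 0" using s1 by simp
    finally show ?thesis by simp
  qed
  have "1 / z\<^sup>2 + 2 / K = (1 + 2 * s) / z\<^sup>2"
    unfolding s_def using z K by (simp add: field_simps)
  also have "\<dots> = (1 + 2 * s) * (1 - s)\<^sup>2 / (z * (1 - s))\<^sup>2"
    using s1 by (simp add: power_mult_distrib)
  also have "\<dots> \<le> 1 / (z * (1 - s))\<^sup>2"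
    using poly by (rule divide_right_mono) simp
  also have "\<dots> \<le> 1 / y\<^sup>2"
    using yz y by (intro divide_left_mono power_mono mult_pos_pos) auto
  finally show ?thesis .
qed

lemma cubic_recursion_decay:
  fixes y :: "nat \<Rightarrow> real" and K :: real
  assumes K: "0 < K" and y0: "\<And>t. 0 \<le> y t" and rec: "\<And>t. y (Suc t) \<le> y t - y t ^ 3 / K"
  shows "2 * real t * (y t)\<^sup>2 \<le> K"
proof -
  have "2 * real t / K \<le> 1 / (y t)\<^sup>2" if "0 < y t" for t
    using that
  proof (induction t)
    case 0
    then show ?case by simp
  next
    case (Suc t)
    have "0 \<le> y t ^ 3 / K"
      using y0[of t] K by simp
    then have "y (Suc t) \<le> y t"
      using rec[of t] by linarith
    with Suc.prems have "0 < y t" by simp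
    have "2 * real (Suc t) / K = 2 * real t / K + 2 / K"
      by (simp add: add_divide_distrib)
    also have "\<dots> \<le> 1 / (y t)\<^sup>2 + 2 / K"
      using Suc.IH[OF \<open>0 < y t\<close>] by simp
    also have "\<dots> \<le> 1 / (y (Suc t))\<^sup>2"
      by (rule inverse_sq_step[OF K \<open>0 < y t\<close> Suc.prems rec])
    finally show ?case .
  qed
  then show ?thesis
    using y0[of t] K by (cases "y t = 0") (auto simp: field_simps)
qed

section \<open>A Nash inequality on the cycle\<close>

definition cycle_dirichlet :: "nat \<Rightarrow> (nat \<Rightarrow> real) \<Rightarrow> real" where
  "cycle_dirichlet n w = (\<Sum>k<n. (w k - w (Suc k mod n))\<^sup>2)"

lemma cycle_dirichlet_nonneg: "0 \<le> cycle_dirichlet n w"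
  unfolding cycle_dirichlet_def by (intro sum_nonneg) auto

lemma sq_le_path_variation:
  fixes u :: "nat \<Rightarrow> real"
  assumes sum0: "(\<Sum>j<n. u j) = 0" and i: "i < n"
  shows "(u i)\<^sup>2 \<le> (\<Sum>k<n - 1. \<bar>u (Suc k) - u k\<bar> * (\<bar>u (Suc k)\<bar> + \<bar>u k\<bar>))"
    (is "_ \<le> ?B")
proof -
  \<comment> \<open>\<open>(u i)\<^sup>2 = \<bar>\<phi> i\<bar>\<close>, and \<open>\<phi>\<close> takes a value of the opposite sign somewhere since \<open>u\<close> sums to 0\<close>
  define \<phi> where "\<phi> k = u k * \<bar>u k\<bar>" for k
  have osc: "\<bar>\<phi> j - \<phi> i\<bar> \<le> ?B" if "j < n" for j
  proof -
    have "\<bar>\<phi> j - \<phi> i\<bar> \<le> (\<Sum>k<n - 1. \<bar>\<phi> (Suc k) - \<phi> k\<bar>)"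
      by (rule abs_diff_le_sum_abs_diff[OF i that])
    also have "\<dots> \<le> ?B"
      unfolding \<phi>_def by (intro sum_mono abs_mult_abs_diff_le)
    finally show ?thesis .
  qed
  show ?thesis
  proof (cases "0 \<le> u i")
    case True
    have "\<exists>j<n. u j \<le> 0"
    proof (rule ccontr)
      assume "\<not> (\<exists>j<n. u j \<le> 0)"
      then have "(\<Sum>j<n. u j) > 0"
        using i by (intro sum_pos) (auto simp: not_le)
      with sum0 show False by simp
    qed
    then obtain j where "j < n" "u j \<le> 0" by blast
    then have "\<phi> j \<le> 0" unfolding \<phi>_def by (simp add: mult_nonpos_nonneg)
    moreover have "\<phi> i = (u i)\<^sup>2" using True unfolding \<phi>_def by (simp add: power2_eq_square)
    ultimately show ?thesis using osc[OF \<open>j < n\<close>] by linarith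
  next
    case False
    have "\<exists>j<n. 0 \<le> u j"
    proof (rule ccontr)
      assume "\<not> (\<exists>j<n. 0 \<le> u j)"
      then have "(\<Sum>j<n. - u j) > 0"
        using i by (intro sum_pos) (auto simp: not_le)
      with sum0 show False by (simp add: sum_negf)
    qed
    then obtain j where "j < n" "0 \<le> u j" by blast
    then have "0 \<le> \<phi> j" unfolding \<phi>_def by simp
    moreover have "\<phi> i = - (u i)\<^sup>2" using False unfolding \<phi>_def by (simp add: power2_eq_square)
    ultimately show ?thesis using osc[OF \<open>j < n\<close>] by linarith
  qed
qed

lemma path_variation_sq_le:
  fixes u :: "nat \<Rightarrow> real"
  shows "(\<Sum>k<n - 1. \<bar>u (Suc k) - u k\<bar> * (\<bar>u (Suc k)\<bar> + \<bar>u k\<bar>))\<^sup>2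
           \<le> 4 * cycle_dirichlet n u * (\<Sum>i<n. (u i)\<^sup>2)"
proof -
  have shift: "(\<Sum>k<n - 1. f (Suc k)) \<le> (\<Sum>k<n. f k)" if "\<And>k. 0 \<le> f k" for f :: "nat \<Rightarrow> real"
  proof -
    have "(\<Sum>k<n - 1. f (Suc k)) = (\<Sum>k\<in>Suc ` {..<n - 1}. f k)"
      by (simp add: sum.reindex)
    also have "\<dots> \<le> (\<Sum>k<n. f k)"
      by (rule sum_mono2) (use that in auto)
    finally show ?thesis .
  qed
  have diffs: "(\<Sum>k<n - 1. \<bar>u (Suc k) - u k\<bar>\<^sup>2) \<le> cycle_dirichlet n u"
  proof -
    have "(\<Sum>k<n - 1. \<bar>u (Suc k) - u k\<bar>\<^sup>2) = (\<Sum>k<n - 1. (u k - u (Suc k mod n))\<^sup>2)"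
      by (intro sum.cong) (auto simp: power2_commute)
    also have "\<dots> \<le> cycle_dirichlet n u"
      unfolding cycle_dirichlet_def by (intro sum_mono2) auto
    finally show ?thesis .
  qed
  have sums: "(\<Sum>k<n - 1. (\<bar>u (Suc k)\<bar> + \<bar>u k\<bar>)\<^sup>2) \<le> 4 * (\<Sum>i<n. (u i)\<^sup>2)"
  proof -
    have "(\<Sum>k<n - 1. (\<bar>u (Suc k)\<bar> + \<bar>u k\<bar>)\<^sup>2)
        \<le> 2 * (\<Sum>k<n - 1. (u (Suc k))\<^sup>2) + 2 * (\<Sum>k<n - 1. (u k)\<^sup>2)"
      using sum_mono[of "{..<n - 1}" "\<lambda>k. (\<bar>u (Suc k)\<bar> + \<bar>u k\<bar>)\<^sup>2"
          "\<lambda>k. 2 * (u (Suc k))\<^sup>2 + 2 * (u k)\<^sup>2"]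
      by (simp add: abs_add_abs_sq_le sum.distrib sum_distrib_left)
    also have "\<dots> \<le> 2 * (\<Sum>i<n. (u i)\<^sup>2) + 2 * (\<Sum>i<n. (u i)\<^sup>2)"
      using shift[of "\<lambda>k. (u k)\<^sup>2"] sum_mono2[of "{..<n}" "{..<n - 1}" "\<lambda>k. (u k)\<^sup>2"] by simp
    finally show ?thesis by simp
  qed
  have "(\<Sum>k<n - 1. \<bar>u (Suc k) - u k\<bar> * (\<bar>u (Suc k)\<bar> + \<bar>u k\<bar>))\<^sup>2
      \<le> (\<Sum>k<n - 1. \<bar>u (Suc k) - u k\<bar>\<^sup>2) * (\<Sum>k<n - 1. (\<bar>u (Suc k)\<bar> + \<bar>u k\<bar>)\<^sup>2)"
    by (rule Cauchy_Schwarz_ineq_sum)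
  also have "\<dots> \<le> cycle_dirichlet n u * (4 * (\<Sum>i<n. (u i)\<^sup>2))"
    using diffs sums by (intro mult_mono) (auto intro: sum_nonneg cycle_dirichlet_nonneg)
  finally show ?thesis by simp
qed

lemma cycle_nash_inequality:
  fixes u :: "nat \<Rightarrow> real"
  assumes sum0: "(\<Sum>i<n. u i) = 0"
  shows "(\<Sum>i<n. (u i)\<^sup>2) ^ 3 \<le> 4 * (\<Sum>i<n. \<bar>u i\<bar>) ^ 4 * cycle_dirichlet n u"
proof -
  define x where "x = (\<Sum>i<n. (u i)\<^sup>2)"
  define L where "L = (\<Sum>i<n. \<bar>u i\<bar>)"
  define B where "B = (\<Sum>k<n - 1. \<bar>u (Suc k) - u k\<bar> * (\<bar>u (Suc k)\<bar> + \<bar>u k\<bar>))"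
  define q where "q = cycle_dirichlet n u"
  have x0: "0 \<le> x" unfolding x_def by (intro sum_nonneg) auto
  have "x \<le> (\<Sum>i<n. \<bar>u i\<bar> * sqrt B)"
    unfolding x_def
  proof (rule sum_mono)
    fix i assume "i \<in> {..<n}"
    then have "\<bar>u i\<bar> \<le> sqrt B"
      using real_sqrt_le_mono[OF sq_le_path_variation[OF sum0]] unfolding B_def by auto
    have "(u i)\<^sup>2 = \<bar>u i\<bar> * \<bar>u i\<bar>" by (simp add: power2_eq_square)
    also have "\<dots> \<le> \<bar>u i\<bar> * sqrt B" using \<open>\<bar>u i\<bar> \<le> sqrt B\<close> by (intro mult_left_mono) auto
    finally show "(u i)\<^sup>2 \<le> \<bar>u i\<bar> * sqrt B" .
  qed
  also have "\<dots> = L * sqrt B" unfolding L_def by (simp add: sum_distrib_right)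
  finally have "x \<le> L * sqrt B" .
  have B0: "0 \<le> B" unfolding B_def by (intro sum_nonneg) auto
  have "x\<^sup>2 \<le> (L * sqrt B)\<^sup>2"
    using \<open>x \<le> L * sqrt B\<close> x0 by (rule power_mono)
  then have x2: "x\<^sup>2 \<le> L\<^sup>2 * B"
    using B0 by (simp add: power_mult_distrib)
  have "x * x ^ 3 = (x\<^sup>2)\<^sup>2" by (simp add: eval_nat_numeral)
  also have "\<dots> \<le> (L\<^sup>2 * B)\<^sup>2"
    using x2 x0 by (intro power_mono) auto
  also have "\<dots> = L ^ 4 * B\<^sup>2" by (simp add: eval_nat_numeral)
  also have "\<dots> \<le> L ^ 4 * (4 * q * x)"
    using path_variation_sq_le[of u n] unfolding B_def q_def x_def
    by (intro mult_left_mono) auto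
  also have "\<dots> = x * (4 * L ^ 4 * q)" by (simp add: algebra_simps)
  finally have "x * x ^ 3 \<le> x * (4 * L ^ 4 * q)" .
  moreover have "0 \<le> 4 * L ^ 4 * q"
    unfolding q_def using cycle_dirichlet_nonneg by simp
  ultimately have "x ^ 3 \<le> 4 * L ^ 4 * q"
    using x0 by (cases "x = 0") auto
  then show ?thesis unfolding x_def L_def q_def .
qed

section \<open>The averaging process\<close>

lemma avg_step_apply: "avg_step (i, j) w = w(i := (w i + w j) / 2, j := (w i + w j) / 2)"
  by (simp add: avg_step_def Let_def)

lemma sum_avg_step:
  fixes F :: "nat \<Rightarrow> real \<Rightarrow> real" and w :: "nat \<Rightarrow> real"
  assumes "finite A" "i \<in> A" "j \<in> A" "i \<noteq> j"
  defines "m \<equiv> (w i + w j) / 2"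
  shows "(\<Sum>k\<in>A. F k (avg_step (i, j) w k))
           = (\<Sum>k\<in>A. F k (w k)) - F i (w i) - F j (w j) + F i m + F j m"
proof -
  have split: "(\<Sum>k\<in>A. G k) = G i + G j + (\<Sum>k\<in>A - {i} - {j}. G k)" for G :: "nat \<Rightarrow> real"
    using assms by (simp add: sum.remove[of A i] sum.remove[of "A - {i}" j])
  have "(\<Sum>k\<in>A - {i} - {j}. F k (avg_step (i, j) w k)) = (\<Sum>k\<in>A - {i} - {j}. F k (w k))"
    by (intro sum.cong) (auto simp: avg_step_apply)
  then show ?thesis
    using split[of "\<lambda>k. F k (avg_step (i, j) w k)"] split[of "\<lambda>k. F k (w k)"] assms(4)
    by (simp add: avg_step_apply m_def)
qed

lemma sum_avg_step_eq:
  assumes "finite A" "i \<in> A" "j \<in> A" "i \<noteq> j"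
  shows "(\<Sum>k\<in>A. avg_step (i, j) w k) = (\<Sum>k\<in>A. w k)"
  using sum_avg_step[OF assms, where F = "\<lambda>_ x. x" and w = w] by simp

lemma sum_abs_avg_step_le:
  assumes "finite A" "i \<in> A" "j \<in> A" "i \<noteq> j"
  shows "(\<Sum>k\<in>A. \<bar>avg_step (i, j) w k - a\<bar>) \<le> (\<Sum>k\<in>A. \<bar>w k - a\<bar>)"
proof -
  have "\<bar>(w i + w j) / 2 - a\<bar> = \<bar>(w i - a) + (w j - a)\<bar> / 2"
    by (simp add: field_simps)
  then have "2 * \<bar>(w i + w j) / 2 - a\<bar> \<le> \<bar>w i - a\<bar> + \<bar>w j - a\<bar>"
    using abs_triangle_ineq[of "w i - a" "w j - a"] by simp
  then show ?thesis
    using sum_avg_step[OF assms, where F = "\<lambda>_ x. \<bar>x - a\<bar>" and w = w] by simp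
qed

lemma sum_sq_avg_step:
  assumes "finite A" "i \<in> A" "j \<in> A" "i \<noteq> j"
  shows "(\<Sum>k\<in>A. (avg_step (i, j) w k - a)\<^sup>2) = (\<Sum>k\<in>A. (w k - a)\<^sup>2) - (w i - w j)\<^sup>2 / 2"
  using sum_avg_step[OF assms, where F = "\<lambda>_ x. (x - a)\<^sup>2" and w = w]
  by (simp add: power2_eq_square field_simps)

lemma sum_mult_avg_step:
  assumes "finite A" "i \<in> A" "j \<in> A" "i \<noteq> j"
  shows "(\<Sum>k\<in>A. avg_step (i, j) w k * f k)
           = (\<Sum>k\<in>A. w k * f k) - (w i - w j) * (f i - f j) / 2"
  using sum_avg_step[OF assms, where F = "\<lambda>k x. x * f k" and w = w]
  by (simp add: field_simps)

lemma finite_set_pmf_avg_state: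
  assumes "finite E" "E \<noteq> {}"
  shows "finite (set_pmf (avg_state E v t))"
  by (induction t) (use assms in auto)

lemma expectation_avg_state_Suc:
  fixes f :: "(nat \<Rightarrow> real) \<Rightarrow> real"
  assumes "finite E" "E \<noteq> {}"
  shows "measure_pmf.expectation (avg_state E v (Suc t)) f
           = measure_pmf.expectation (avg_state E v t) (\<lambda>w. (\<Sum>e\<in>E. f (avg_step e w)) / card E)"
proof -
  let ?S = "set_pmf (avg_state E v t)"
  have "measure_pmf.expectation (avg_state E v (Suc t)) f
      = (\<Sum>w\<in>?S. pmf (avg_state E v t) w *\<^sub>R
           measure_pmf.expectation (map_pmf (\<lambda>e. avg_step e w) (pmf_of_set E)) f)"
    using assms finite_set_pmf_avg_state[OF assms]
    by (simp only: avg_state.simps) (rule pmf_expectation_bind; simp)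
  also have "\<dots> = measure_pmf.expectation (avg_state E v t) (\<lambda>w. (\<Sum>e\<in>E. f (avg_step e w)) / card E)"
    using assms finite_set_pmf_avg_state[OF assms]
    by (subst integral_measure_pmf[of ?S]) (auto simp: integral_pmf_of_set)
  finally show ?thesis .
qed

lemma avg_state_le_initial:
  fixes \<Phi> :: "(nat \<Rightarrow> real) \<Rightarrow> real"
  assumes "finite E" "E \<noteq> {}"
    and step: "\<And>i j w. (i, j) \<in> E \<Longrightarrow> \<Phi> (avg_step (i, j) w) \<le> \<Phi> w"
    and "w \<in> set_pmf (avg_state E v t)"
  shows "\<Phi> w \<le> \<Phi> v"
  using assms(4)
proof (induction t arbitrary: w)
  case 0
  then show ?case by simp
next
  case (Suc t)
  then obtain w' i j where "w' \<in> set_pmf (avg_state E v t)" "(i, j) \<in> E" "w = avg_step (i, j) w'"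
    using assms(1,2) by auto
  then show ?case using Suc.IH step by (meson order_trans)
qed

lemma expectation_mono_finite_pmf:
  fixes f g :: "'a \<Rightarrow> real"
  assumes "finite (set_pmf p)" "\<And>x. x \<in> set_pmf p \<Longrightarrow> f x \<le> g x"
  shows "measure_pmf.expectation p f \<le> measure_pmf.expectation p g"
  using assms by (intro integral_mono_AE integrable_measure_pmf_finite) (auto simp: AE_measure_pmf_iff)

lemma expectation_affine_finite_pmf:
  fixes f :: "'a \<Rightarrow> real"
  assumes "finite (set_pmf p)"
  shows "measure_pmf.expectation p (\<lambda>x. \<alpha> * f x + \<beta>) = \<alpha> * measure_pmf.expectation p f + \<beta>"
  using assms by (simp add: integrable_measure_pmf_finite)

lemma cycle_edges_eq_image: "cycle_edges n = (\<lambda>k. (k, Suc k mod n)) ` {..<n}"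
  unfolding cycle_edges_def by auto

lemma finite_cycle_edges: "finite (cycle_edges n)"
  by (simp add: cycle_edges_eq_image)

lemma cycle_edges_nonempty: "0 < n \<Longrightarrow> cycle_edges n \<noteq> {}"
  by (auto simp: cycle_edges_eq_image)

lemma sum_cycle_edges: "(\<Sum>e\<in>cycle_edges n. f e) = (\<Sum>k<n. f (k, Suc k mod n))"
  unfolding cycle_edges_eq_image by (subst sum.reindex) (auto simp: inj_on_def)

lemma card_cycle_edges: "card (cycle_edges n) = n"
  unfolding cycle_edges_eq_image by (simp add: card_image inj_on_def)

lemma cycle_edge_endpoints:
  assumes "2 \<le> n" "k < n"
  shows "Suc k mod n < n" "k \<noteq> Suc k mod n"
  using assms by (auto simp: mod_Suc)

lemma cycle_edgesD:
  assumes "2 \<le> n" "(i, j) \<in> cycle_edges n"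
  shows "i < n" "j < n" "i \<noteq> j"
  using assms cycle_edge_endpoints[OF assms(1)] by (auto simp: cycle_edges_def)

lemma finite_set_pmf_avg_state_cycle: "0 < n \<Longrightarrow> finite (set_pmf (avg_state (cycle_edges n) v t))"
  by (intro finite_set_pmf_avg_state finite_cycle_edges cycle_edges_nonempty)

lemma expectation_avg_state_cycle_Suc:
  fixes f :: "(nat \<Rightarrow> real) \<Rightarrow> real"
  assumes "0 < n"
  shows "measure_pmf.expectation (avg_state (cycle_edges n) v (Suc t)) f
           = measure_pmf.expectation (avg_state (cycle_edges n) v t)
               (\<lambda>w. (\<Sum>k<n. f (avg_step (k, Suc k mod n) w)) / n)"
  using assms
  by (subst expectation_avg_state_Suc) (simp_all add: finite_cycle_edges cycle_edges_nonempty
      sum_cycle_edges card_cycle_edges)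

lemma sum_lessThan_Suc_mod:
  fixes H :: "nat \<Rightarrow> 'a :: comm_monoid_add"
  assumes "0 < n"
  shows "(\<Sum>k<n. H (Suc k mod n)) = (\<Sum>k<n. H k)"
proof -
  obtain m where m: "n = Suc m" using assms by (cases n) auto
  have "(\<Sum>k<n. H (Suc k mod n)) = (\<Sum>k<m. H (Suc k)) + H 0"
    by (simp add: m)
  also have "\<dots> = (\<Sum>k<n. H k)"
    unfolding m sum.lessThan_Suc_shift by (simp add: add.commute)
  finally show ?thesis .
qed

section \<open>Decay of the squared distance: the upper bound\<close>

definition sq_dev :: "nat \<Rightarrow> real \<Rightarrow> (nat \<Rightarrow> real) \<Rightarrow> real" where
  "sq_dev n a w = (\<Sum>i<n. (w i - a)\<^sup>2)"

lemma sq_dev_nonneg: "0 \<le> sq_dev n a w"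
  unfolding sq_dev_def by (intro sum_nonneg) auto

lemma sum_abs_le_sq_dev:
  fixes \<epsilon> :: real
  assumes \<epsilon>: "0 < \<epsilon>"
  shows "(\<Sum>i<n. \<bar>w i - a\<bar>) \<le> n * sq_dev n a w / (2 * \<epsilon>) + \<epsilon> / 2"
proof -
  define g where "g = (\<Sum>i<n. \<bar>w i - a\<bar>)"
  have "g\<^sup>2 \<le> (\<Sum>i<n. 1\<^sup>2) * (\<Sum>i<n. \<bar>w i - a\<bar>\<^sup>2)"
    unfolding g_def using Cauchy_Schwarz_ineq_sum[of "\<lambda>_. 1" "\<lambda>i. \<bar>w i - a\<bar>" "{..<n}"] by simp
  then have g2: "g\<^sup>2 \<le> n * sq_dev n a w"
    unfolding sq_dev_def by simp
  have "(g\<^sup>2 / \<epsilon> + \<epsilon>) / 2 - g = (g - \<epsilon>)\<^sup>2 / (2 * \<epsilon>)"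
    using \<epsilon> by (simp add: field_simps power2_eq_square)
  then have "g \<le> (g\<^sup>2 / \<epsilon> + \<epsilon>) / 2"
    using \<epsilon> by (metis diff_ge_0_iff_ge divide_nonneg_pos zero_le_power2 mult_pos_pos zero_less_numeral)
  also have "\<dots> \<le> (n * sq_dev n a w / \<epsilon> + \<epsilon>) / 2"
    using g2 \<epsilon> by (simp add: divide_right_mono)
  finally show ?thesis unfolding g_def by (simp add: field_simps)
qed

lemma mean_sq_dev_cycle_step:
  assumes "2 \<le> n"
  shows "(\<Sum>k<n. sq_dev n a (avg_step (k, Suc k mod n) w)) / n
           = sq_dev n a w - cycle_dirichlet n w / (2 * n)"
proof -
  have "(\<Sum>k<n. sq_dev n a (avg_step (k, Suc k mod n) w))
      = (\<Sum>k<n. sq_dev n a w - (w k - w (Suc k mod n))\<^sup>2 / 2)"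
    unfolding sq_dev_def using cycle_edge_endpoints[OF assms]
    by (intro sum.cong refl sum_sq_avg_step) auto
  also have "\<dots> = n * sq_dev n a w - cycle_dirichlet n w / 2"
    by (simp add: cycle_dirichlet_def sum_subtractf sum_divide_distrib)
  finally show ?thesis using assms by (simp add: field_simps)
qed

lemma sum_abs_sub_mean_le: "(\<Sum>i<n. \<bar>v i - mean_val n v\<bar>) \<le> 2 * l1norm n v"
proof (cases "n = 0")
  case False
  have "(\<Sum>i<n. \<bar>v i - mean_val n v\<bar>) \<le> (\<Sum>i<n. \<bar>v i\<bar> + \<bar>mean_val n v\<bar>)"
    by (intro sum_mono abs_triangle_ineq4)
  also have "\<dots> = l1norm n v + \<bar>\<Sum>i<n. v i\<bar>"
    using False by (simp add: sum.distrib l1norm_def mean_val_def abs_divide)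
  also have "\<dots> \<le> 2 * l1norm n v"
    using sum_abs[of v "{..<n}"] by (simp add: l1norm_def)
  finally show ?thesis .
qed (simp add: l1norm_def)

lemma avg_state_cycle_centered:
  assumes n: "2 \<le> n" and w: "w \<in> set_pmf (avg_state (cycle_edges n) v t)"
  shows "(\<Sum>i<n. w i - mean_val n v) = 0"
    and "(\<Sum>i<n. \<bar>w i - mean_val n v\<bar>) \<le> (\<Sum>i<n. \<bar>v i - mean_val n v\<bar>)"
proof -
  have E: "finite (cycle_edges n)" "cycle_edges n \<noteq> {}"
    using n by (auto simp: finite_cycle_edges cycle_edges_nonempty)
  note endpoints = cycle_edgesD[OF n]
  have "(\<Sum>i<n. w i) \<le> (\<Sum>i<n. v i)" "- (\<Sum>i<n. w i) \<le> - (\<Sum>i<n. v i)"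
    using avg_state_le_initial[OF E _ w, where \<Phi> = "\<lambda>w. \<Sum>i<n. w i"]
      avg_state_le_initial[OF E _ w, where \<Phi> = "\<lambda>w. - (\<Sum>i<n. w i)"]
    by (simp_all add: sum_avg_step_eq endpoints)
  then show "(\<Sum>i<n. w i - mean_val n v) = 0"
    using n by (simp add: sum_subtractf mean_val_def)
  show "(\<Sum>i<n. \<bar>w i - mean_val n v\<bar>) \<le> (\<Sum>i<n. \<bar>v i - mean_val n v\<bar>)"
    using avg_state_le_initial[OF E _ w, where \<Phi> = "\<lambda>w. \<Sum>i<n. \<bar>w i - mean_val n v\<bar>"]
    by (simp add: sum_abs_avg_step_le endpoints)
qed

lemma expected_sq_dev_recursion:
  assumes n: "2 \<le> n" and L: "0 < L" and l1: "(\<Sum>i<n. \<bar>v i - mean_val n v\<bar>) \<le> L"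
  defines "y s \<equiv> measure_pmf.expectation (avg_state (cycle_edges n) v s) (sq_dev n (mean_val n v))"
  shows "y (Suc s) \<le> y s - y s ^ 3 / (8 * n * L ^ 4)"
proof -
  define a where "a = mean_val n v"
  define K where "K = 8 * n * L ^ 4"
  define p where "p = avg_state (cycle_edges n) v s"
  define z where "z = y s"
  have K: "0 < K" unfolding K_def using n L by simp
  have fin: "finite (set_pmf p)"
    unfolding p_def using n by (intro finite_set_pmf_avg_state_cycle) simp
  have z0: "0 \<le> z"
    unfolding z_def y_def by (intro integral_nonneg_AE) (simp add: sq_dev_nonneg)
  \<comment> \<open>Jensen's inequality for the cube, via its tangent line at the mean \<open>z\<close>\<close>
  have tangent: "sq_dev n a w - cycle_dirichlet n w / (2 * n) \<le> (1 - 3 * z\<^sup>2 / K) * sq_dev n a w + 2 * z ^ 3 / K"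
    if w: "w \<in> set_pmf p" for w
  proof -
    have "(\<Sum>i<n. w i - a) = 0" "(\<Sum>i<n. \<bar>w i - a\<bar>) \<le> L"
      using avg_state_cycle_centered[OF n w[unfolded p_def]] l1 unfolding a_def by auto
    then have "sq_dev n a w ^ 3 \<le> 4 * (\<Sum>i<n. \<bar>w i - a\<bar>) ^ 4 * cycle_dirichlet n w"
      using cycle_nash_inequality[of "\<lambda>i. w i - a" n] by (simp add: sq_dev_def cycle_dirichlet_def)
    also have "\<dots> \<le> 4 * L ^ 4 * cycle_dirichlet n w"
      using \<open>(\<Sum>i<n. \<bar>w i - a\<bar>) \<le> L\<close>
      by (intro mult_right_mono mult_left_mono power_mono) (auto intro: sum_nonneg cycle_dirichlet_nonneg)
    finally have "z ^ 3 + 3 * z\<^sup>2 * (sq_dev n a w - z) \<le> 4 * L ^ 4 * cycle_dirichlet n w"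
      using cube_ge_tangent[OF sq_dev_nonneg[of n a w] z0] by linarith
    then have "(z ^ 3 + 3 * z\<^sup>2 * (sq_dev n a w - z)) / K \<le> 4 * L ^ 4 * cycle_dirichlet n w / K"
      using K by (simp add: divide_right_mono)
    also have "\<dots> = cycle_dirichlet n w / (2 * n)"
      unfolding K_def using n L by (simp add: field_simps)
    finally show ?thesis
      using K by (simp add: field_simps power2_eq_square power3_eq_cube)
  qed
  have "y (Suc s) = measure_pmf.expectation p (\<lambda>w. sq_dev n a w - cycle_dirichlet n w / (2 * n))"
    unfolding y_def p_def a_def using n
    by (subst expectation_avg_state_cycle_Suc) (simp_all add: mean_sq_dev_cycle_step)
  also have "\<dots> \<le> measure_pmf.expectation p (\<lambda>w. (1 - 3 * z\<^sup>2 / K) * sq_dev n a w + 2 * z ^ 3 / K)"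
    using fin tangent by (rule expectation_mono_finite_pmf)
  also have "\<dots> = (1 - 3 * z\<^sup>2 / K) * z + 2 * z ^ 3 / K"
    using fin unfolding z_def y_def p_def a_def by (rule expectation_affine_finite_pmf)
  also have "\<dots> = z - z ^ 3 / K"
    using K by (simp add: field_simps power2_eq_square power3_eq_cube)
  finally show ?thesis unfolding z_def K_def .
qed

lemma cycle_mixing_upper:
  fixes \<epsilon> :: real
  assumes n: "2 \<le> n" and \<epsilon>: "0 < \<epsilon>" and v: "l1norm n v = 1" and t: "64 * real n ^ 3 / \<epsilon> ^ 4 \<le> t"
  shows "exp_l1_dist n (cycle_edges n) v t \<le> \<epsilon>"
proof -
  define a where "a = mean_val n v"
  define p where "p = avg_state (cycle_edges n) v t"
  define y where "y s = measure_pmf.expectation (avg_state (cycle_edges n) v s) (sq_dev n a)" for s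
  have fin: "finite (set_pmf p)"
    unfolding p_def using n by (intro finite_set_pmf_avg_state_cycle) simp
  have t0: "0 < real t"
    using n \<epsilon> by (intro order.strict_trans2[OF _ t]) simp
  have "2 * real t * (y t)\<^sup>2 \<le> 8 * real n * 2 ^ 4"
  proof (rule cubic_recursion_decay)
    show "0 \<le> y s" for s
      unfolding y_def by (intro integral_nonneg_AE) (simp add: sq_dev_nonneg)
    show "y (Suc s) \<le> y s - y s ^ 3 / (8 * real n * 2 ^ 4)" for s
      unfolding y_def a_def
      using expected_sq_dev_recursion[OF n _ sum_abs_sub_mean_le[of v n]] v by simp
  qed (use n in simp)
  then have "(y t)\<^sup>2 \<le> 64 * n / t"
    using t0 by (simp add: field_simps)
  then have "(n * y t)\<^sup>2 \<le> (real n)\<^sup>2 * (64 * n / t)"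
    unfolding power_mult_distrib by (rule mult_left_mono) simp
  also have "\<dots> = 64 * real n ^ 3 / t"
    by (simp add: power2_eq_square power3_eq_cube)
  also have "\<dots> \<le> (\<epsilon>\<^sup>2)\<^sup>2"
    using t t0 \<epsilon> by (simp add: field_simps)
  finally have ny: "n * y t \<le> \<epsilon>\<^sup>2"
    by (rule power2_le_imp_le) simp
  have "exp_l1_dist n (cycle_edges n) v t = measure_pmf.expectation p (\<lambda>w. \<Sum>i<n. \<bar>w i - a\<bar>)"
    unfolding exp_l1_dist_def p_def a_def ..
  also have "\<dots> \<le> measure_pmf.expectation p (\<lambda>w. n / (2 * \<epsilon>) * sq_dev n a w + \<epsilon> / 2)"
    using fin sum_abs_le_sq_dev[OF \<epsilon>] by (intro expectation_mono_finite_pmf) simp_all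
  also have "\<dots> = n * y t / (2 * \<epsilon>) + \<epsilon> / 2"
    unfolding y_def p_def by (subst expectation_affine_finite_pmf[OF fin[unfolded p_def]]) simp
  also have "\<dots> \<le> \<epsilon>\<^sup>2 / (2 * \<epsilon>) + \<epsilon> / 2"
    using ny \<epsilon> by (simp add: divide_right_mono)
  also have "\<dots> = \<epsilon>"
    using \<epsilon> by (simp add: power2_eq_square)
  finally show ?thesis .
qed

section \<open>A cosine eigenvector: the lower bound\<close>

definition cos_mode :: "nat \<Rightarrow> nat \<Rightarrow> real" where
  "cos_mode n k = cos (2 * pi / n * k)"

definition cos_coeff :: "nat \<Rightarrow> (nat \<Rightarrow> real) \<Rightarrow> real" where
  "cos_coeff n w = (\<Sum>i<n. w i * cos_mode n i)"

definition cycle_gap :: "nat \<Rightarrow> real" where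
  "cycle_gap n = 2 - 2 * cos (2 * pi / n)"

lemma cos_mod_period:
  fixes m n :: nat and c :: real
  assumes "0 < n"
  shows "cos (2 * pi / n * (m mod n) + c) = cos (2 * pi / n * m + c)"
proof -
  have "real m = real (m mod n) + real n * real (m div n)"
    by (metis of_nat_add of_nat_mult mod_mult_div_eq add.commute mult.commute)
  then have shift: "2 * pi / n * m + c = (2 * pi / n * (m mod n) + c) + 2 * pi * real (m div n)"
    using assms by (simp add: field_simps)
  have "cos (x + 2 * pi * real (m div n)) = cos x" for x
    by (simp add: cos_add cos_integer_2pi sin_integer_2pi)
  then show ?thesis
    by (simp only: shift)
qed

lemma cycle_dirichlet_form_cos_mode:
  assumes n: "0 < n"
  shows "(\<Sum>k<n. (w k - w (Suc k mod n)) * (cos_mode n k - cos_mode n (Suc k mod n)))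
           = cycle_gap n * cos_coeff n w"
proof -
  define \<theta> where "\<theta> = 2 * pi / n"
  define f where "f = cos_mode n"
  have f: "f k = cos (\<theta> * k)" for k
    unfolding f_def cos_mode_def \<theta>_def ..
  have f_succ: "f (Suc k mod n) = cos (\<theta> * k + \<theta>)" for k
  proof -
    have "f (Suc k mod n) = cos (2 * pi / n * (Suc k mod n) + 0)"
      unfolding f_def cos_mode_def by simp
    also have "\<dots> = cos (2 * pi / n * Suc k + 0)"
      by (rule cos_mod_period[OF n])
    also have "2 * pi / n * Suc k + 0 = \<theta> * k + \<theta>"
      unfolding \<theta>_def by (simp add: distrib_left)
    finally show ?thesis .
  qed
  have f_pred: "f k = cos (\<theta> * (Suc k mod n) - \<theta>)" for k
  proof -
    have "cos (\<theta> * (Suc k mod n) - \<theta>) = cos (2 * pi / n * (Suc k mod n) + - \<theta>)"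
      unfolding \<theta>_def by simp
    also have "\<dots> = cos (2 * pi / n * Suc k + - \<theta>)"
      by (rule cos_mod_period[OF n])
    also have "2 * pi / n * Suc k + - \<theta> = \<theta> * k"
      unfolding \<theta>_def by (simp add: distrib_left)
    finally show ?thesis unfolding f ..
  qed
  have "(\<Sum>k<n. w (Suc k mod n) * (f k - f (Suc k mod n)))
      = (\<Sum>k<n. w (Suc k mod n) * (cos (\<theta> * (Suc k mod n) - \<theta>) - f (Suc k mod n)))"
    by (intro sum.cong refl) (simp only: f_pred[symmetric])
  also have "\<dots> = (\<Sum>k<n. w k * (cos (\<theta> * k - \<theta>) - f k))"
    by (rule sum_lessThan_Suc_mod[OF n, where H = "\<lambda>k. w k * (cos (\<theta> * k - \<theta>) - f k)"])
  finally have rotated: "(\<Sum>k<n. w (Suc k mod n) * (f k - f (Suc k mod n)))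
      = (\<Sum>k<n. w k * (cos (\<theta> * k - \<theta>) - f k))" .
  have "(\<Sum>k<n. (w k - w (Suc k mod n)) * (f k - f (Suc k mod n)))
      = (\<Sum>k<n. w k * (f k - f (Suc k mod n))) - (\<Sum>k<n. w (Suc k mod n) * (f k - f (Suc k mod n)))"
    by (simp add: left_diff_distrib sum_subtractf)
  also have "\<dots> = (\<Sum>k<n. w k * (f k - cos (\<theta> * k + \<theta>))) - (\<Sum>k<n. w k * (cos (\<theta> * k - \<theta>) - f k))"
    unfolding rotated by (simp only: f_succ)
  also have "\<dots> = (\<Sum>k<n. w k * (2 * f k - cos (\<theta> * k + \<theta>) - cos (\<theta> * k - \<theta>)))"
    by (simp add: sum_subtractf[symmetric] algebra_simps)
  also have "\<dots> = (\<Sum>k<n. (2 - 2 * cos \<theta>) * (w k * f k))"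
    by (intro sum.cong refl) (simp add: f cos_add cos_diff algebra_simps)
  finally show ?thesis
    unfolding cycle_gap_def cos_coeff_def f_def \<theta>_def by (simp add: sum_distrib_left)
qed

lemma cycle_gap_pos:
  assumes "2 \<le> n"
  shows "0 < cycle_gap n"
proof -
  have "cos (2 * pi / n) < cos 0"
    using assms by (intro cos_monotone_0_pi) (auto simp: field_simps)
  then show ?thesis unfolding cycle_gap_def by simp
qed

lemma cycle_gap_le: "cycle_gap n \<le> (2 * pi / n)\<^sup>2"
proof -
  have "cycle_gap n = 4 * (sin (pi / n))\<^sup>2"
    using cos_double_sin[of "pi / n"] unfolding cycle_gap_def by (simp add: mult.assoc)
  also have "\<dots> \<le> 4 * (pi / n)\<^sup>2"
    using abs_le_square_iff abs_sin_x_le_abs_x by (metis mult_left_mono zero_le_numeral)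
  also have "\<dots> = (2 * pi / n)\<^sup>2"
    by (simp add: power2_eq_square)
  finally show ?thesis .
qed

lemma cycle_gap_le_4: "cycle_gap n \<le> 4"
  unfolding cycle_gap_def using cos_ge_minus_one[of "2 * pi / n"] by linarith

lemma sum_cos_mode:
  assumes "2 \<le> n"
  shows "(\<Sum>i<n. cos_mode n i) = 0"
  using cycle_dirichlet_form_cos_mode[of n "\<lambda>_. 1"] cycle_gap_pos[OF assms] assms
  by (simp add: cos_coeff_def)

lemma mean_cos_coeff_cycle_step:
  assumes n: "2 \<le> n"
  shows "(\<Sum>k<n. cos_coeff n (avg_step (k, Suc k mod n) w)) / n
           = (1 - cycle_gap n / (2 * n)) * cos_coeff n w"
proof -
  have "(\<Sum>k<n. cos_coeff n (avg_step (k, Suc k mod n) w))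
      = (\<Sum>k<n. cos_coeff n w - (w k - w (Suc k mod n)) * (cos_mode n k - cos_mode n (Suc k mod n)) / 2)"
    unfolding cos_coeff_def using cycle_edge_endpoints[OF n]
    by (intro sum.cong refl sum_mult_avg_step) auto
  also have "\<dots> = n * cos_coeff n w - cycle_gap n * cos_coeff n w / 2"
    using n by (simp add: sum_subtractf sum_divide_distrib[symmetric] cycle_dirichlet_form_cos_mode)
  finally show ?thesis using n by (simp add: field_simps)
qed

lemma expectation_cos_coeff:
  assumes "2 \<le> n"
  shows "measure_pmf.expectation (avg_state (cycle_edges n) v t) (cos_coeff n)
           = (1 - cycle_gap n / (2 * n)) ^ t * cos_coeff n v"
proof (induction t)
  case 0
  then show ?case by simp
next
  case (Suc t)
  then show ?case
    using assms
    by (subst expectation_avg_state_cycle_Suc) (simp_all add: mean_cos_coeff_cycle_step)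
qed

lemma cos_coeff_le_l1_dist:
  assumes "2 \<le> n"
  shows "cos_coeff n w \<le> (\<Sum>i<n. \<bar>w i - a\<bar>)"
proof -
  have "cos_coeff n w = (\<Sum>i<n. (w i - a) * cos_mode n i)"
    using sum_cos_mode[OF assms]
    by (simp add: cos_coeff_def left_diff_distrib sum_subtractf sum_distrib_left[symmetric])
  also have "\<dots> \<le> (\<Sum>i<n. \<bar>w i - a\<bar>)"
  proof (rule sum_mono)
    fix i
    have "(w i - a) * cos_mode n i \<le> \<bar>w i - a\<bar> * \<bar>cos_mode n i\<bar>"
      by (metis abs_ge_self abs_mult)
    also have "\<dots> \<le> \<bar>w i - a\<bar>"
      unfolding cos_mode_def by (simp add: mult_left_le)
    finally show "(w i - a) * cos_mode n i \<le> \<bar>w i - a\<bar>" .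
  qed
  finally show ?thesis .
qed

lemma cycle_mixing_lower:
  fixes \<epsilon> :: real
  assumes n: "2 \<le> n" and t: "real t * (2 * pi\<^sup>2 / real n ^ 3) < 1 - \<epsilon>"
  shows "\<epsilon> < exp_l1_dist n (cycle_edges n) (\<lambda>i. if i = 0 then 1 else 0) t"
proof -
  define \<delta> :: "nat \<Rightarrow> real" where "\<delta> i = (if i = 0 then 1 else 0)" for i
  define x where "x = - cycle_gap n / (2 * n)"
  have "cos_coeff n \<delta> = (\<Sum>i<n. if i = 0 then cos_mode n i else 0)"
    unfolding cos_coeff_def \<delta>_def by (intro sum.cong) auto
  also have "\<dots> = 1"
    using n by (simp add: cos_mode_def)
  finally have "cos_coeff n \<delta> = 1" .
  have "- x \<le> 2 * pi\<^sup>2 / real n ^ 3"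
  proof -
    have "- x \<le> (2 * pi / n)\<^sup>2 / (2 * n)"
      unfolding x_def using cycle_gap_le[of n] n by (simp add: divide_right_mono)
    also have "\<dots> = 2 * pi\<^sup>2 / real n ^ 3"
      by (simp add: power2_eq_square power3_eq_cube field_simps)
    finally show ?thesis .
  qed
  have "-1 \<le> x"
    unfolding x_def using cycle_gap_le_4[of n] n by (simp add: field_simps)
  have "\<epsilon> < 1 + real t * x"
    using t mult_left_mono[OF \<open>- x \<le> _\<close>, of "real t"] by simp
  also have "\<dots> \<le> (1 + x) ^ t"
    using \<open>-1 \<le> x\<close> by (rule Bernoulli_inequality)
  also have "\<dots> = measure_pmf.expectation (avg_state (cycle_edges n) \<delta> t) (cos_coeff n)"
    using expectation_cos_coeff[OF n] \<open>cos_coeff n \<delta> = 1\<close> unfolding x_def by simp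
  also have "\<dots> \<le> exp_l1_dist n (cycle_edges n) \<delta> t"
    unfolding exp_l1_dist_def using n
    by (intro expectation_mono_finite_pmf finite_set_pmf_avg_state_cycle cos_coeff_le_l1_dist) auto
  finally show ?thesis unfolding \<delta>_def .
qed

lemma t_eps_1_le:
  assumes "\<And>v. l1norm n v = 1 \<Longrightarrow> exp_l1_dist n E v T \<le> \<epsilon>"
  shows "t_eps_1 \<epsilon> n E \<le> T"
  unfolding t_eps_1_def by (rule Least_le) (use assms in blast)

lemma t_eps_1_mixes:
  assumes "\<And>v. l1norm n v = 1 \<Longrightarrow> exp_l1_dist n E v T \<le> \<epsilon>" and "l1norm n v = 1"
  shows "exp_l1_dist n E v (t_eps_1 \<epsilon> n E) \<le> \<epsilon>"
proof -
  have "\<forall>v. l1norm n v = 1 \<longrightarrow> exp_l1_dist n E v (t_eps_1 \<epsilon> n E) \<le> \<epsilon>"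
    unfolding t_eps_1_def by (rule LeastI[of _ T]) (use assms(1) in blast)
  with assms(2) show ?thesis by blast
qed

lemma t_eps_1_cycle_le:
  fixes \<epsilon> :: real
  assumes "2 \<le> n" "0 < \<epsilon>"
  shows "real (t_eps_1 \<epsilon> n (cycle_edges n)) \<le> 64 * real n ^ 3 / \<epsilon> ^ 4 + 1"
proof -
  have "t_eps_1 \<epsilon> n (cycle_edges n) \<le> nat \<lceil>64 * real n ^ 3 / \<epsilon> ^ 4\<rceil>"
    using assms by (intro t_eps_1_le cycle_mixing_upper real_nat_ceiling_ge)
  moreover have "real (nat \<lceil>64 * real n ^ 3 / \<epsilon> ^ 4\<rceil>) \<le> 64 * real n ^ 3 / \<epsilon> ^ 4 + 1"
    using assms by simp
  ultimately show ?thesis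
    by (meson of_nat_le_iff order_trans)
qed

lemma t_eps_1_cycle_ge:
  fixes \<epsilon> :: real
  assumes n: "2 \<le> n" and \<epsilon>: "0 < \<epsilon>"
  shows "(1 - \<epsilon>) / (2 * pi\<^sup>2) * real n ^ 3 \<le> real (t_eps_1 \<epsilon> n (cycle_edges n))"
proof (rule ccontr)
  define \<delta> :: "nat \<Rightarrow> real" where "\<delta> i = (if i = 0 then 1 else 0)" for i
  assume "\<not> ?thesis"
  then have "real (t_eps_1 \<epsilon> n (cycle_edges n)) * (2 * pi\<^sup>2 / real n ^ 3) < 1 - \<epsilon>"
    using n by (simp add: field_simps)
  then have "\<epsilon> < exp_l1_dist n (cycle_edges n) \<delta> (t_eps_1 \<epsilon> n (cycle_edges n))"
    unfolding \<delta>_def by (rule cycle_mixing_lower[OF n])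
  moreover have "exp_l1_dist n (cycle_edges n) \<delta> (t_eps_1 \<epsilon> n (cycle_edges n)) \<le> \<epsilon>"
    using n \<epsilon> real_nat_ceiling_ge
    by (intro t_eps_1_mixes cycle_mixing_upper) (auto simp: l1norm_def \<delta>_def)
  ultimately show False by simp
qed

theorem theorem7:
  fixes \<epsilon> :: real
  assumes "0 < \<epsilon>" and "\<epsilon> < 1"
  shows "\<exists>c C. 0 < c \<and> c \<le> C \<and>
           (\<forall>n\<ge>3. c * real n ^ 3 \<le> real (t_eps_1 \<epsilon> n (cycle_edges n))
                  \<and> real (t_eps_1 \<epsilon> n (cycle_edges n)) \<le> C * real n ^ 3)"
proof (intro exI conjI allI impI)
  show "0 < (1 - \<epsilon>) / (2 * pi\<^sup>2)"
    using assms by simp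
  have "1 \<le> pi * pi"
    using mult_mono[of 1 pi 1 pi] pi_gt3 by simp
  then have "(1 - \<epsilon>) / (2 * pi\<^sup>2) \<le> 1"
    using assms by (simp add: field_simps power2_eq_square)
  moreover have "0 \<le> 64 / \<epsilon> ^ 4"
    using assms by simp
  ultimately show "(1 - \<epsilon>) / (2 * pi\<^sup>2) \<le> 64 / \<epsilon> ^ 4 + 1"
    by linarith
  fix n :: nat
  assume "3 \<le> n"
  then show "(1 - \<epsilon>) / (2 * pi\<^sup>2) * real n ^ 3 \<le> real (t_eps_1 \<epsilon> n (cycle_edges n))"
    using assms by (intro t_eps_1_cycle_ge) auto
  have "64 * real n ^ 3 / \<epsilon> ^ 4 + 1 \<le> (64 / \<epsilon> ^ 4 + 1) * real n ^ 3"
    using \<open>3 \<le> n\<close> by (simp add: algebra_simps one_le_power)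
  then show "real (t_eps_1 \<epsilon> n (cycle_edges n)) \<le> (64 / \<epsilon> ^ 4 + 1) * real n ^ 3"
    using t_eps_1_cycle_le[of n \<epsilon>] \<open>3 \<le> n\<close> assms by linarith
qed

end
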